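(* Let $\mathcal{H}_O\simeq\mathbb{C}^{d_O}$ and $\mathcal{H}_R\simeq\mathbb{C}^{d_R}$. Let $H_R=\sum_{m=1}^{d_R}\lambda_m^{\uparrow}|\xi_m\rangle\langle\xi_m|$ with $\lambda_1^\uparrow\leqslant\dots\leqslant\lambda_{d_R}^\uparrow$ and $\{|\xi_m\rangle\}$ an orthonormal basis of $\mathcal{H}_R$; let $\beta\in(0,\infty)$ and $\rho_R(\beta)=e^{-\beta H_R}/\mathrm{tr}[e^{-\beta H_R}]=\sum_m r_m^{\downarrow}|\xi_m\rangle\langle\xi_m|$. Let $\rho_O=\sum_{l=1}^{d_O}o_l^{\downarrow}|\varphi_l\rangle\langle\varphi_l|$ be a density operator on $\mathcal{H}_O$ with $o_1^\downarrow\geqslant\dots\geqslant o_{d_O}^\downarrow$ and $\{|\varphi_l\rangle\}$ an orthonormal basis. Write $\rho=\rho_O\otimes\rho_R(\beta)=\sum_{n=1}^{d_Od_R}p_n^{\downarrow}|\psi_n\rangle\langle\psi_n|$, where $(p_n^\downarrow)_n$ is the non-increasing rearrangement of $(o_l^\downarrow r_m^\downarrow)_{l,m}$ and $(|\psi_n\rangle)_n$ the correspondingly rearranged family $(|\varphi_l\rangle\otimes|\xi_m\rangle)_{l,m}$. For a unitary $U$ on $\mathcal{H}_O\otimes\mathcal{H}_R$ define the heat $\Delta Q(U)=\mathrm{tr}[H_R(\mathrm{tr}_O[U\rho U^\dagger]-\rho_R(\beta))]$. Suppose $U_{\mathrm{maj}}^f$ is a unitary such that, for every $m\in\{1,\dots,d_R\}$,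 there is an orthonormal basis $\{|\varphi_l^m\rangle\}_{l=1}^{d_O}$ of $\mathcal{H}_O$ with $$U_{\mathrm{maj}}^f|\psi_{(m-1)d_O+l}\rangle=|\varphi_l^m\rangle\otimes|\xi_m\rangle\quad\text{for all } l\in\{1,\dots,d_O\}.$$ Then $\Delta Q(U_{\mathrm{maj}}^f)\leqslant\Delta Q(U)$ for every unitary $U$ on $\mathcal{H}_O\otimes\mathcal{H}_R$.
   Context: $\mathrm{tr}_O$ denotes the partial trace over $\mathcal{H}_O$. *)

theory Defs
  imports Complex_Main "Jordan_Normal_Form.Matrix"
begin

text \<open>Indices are 0-based. Composite index convention:
  the basis vector e_i (x) e_j of C^a (x) C^b has index i * b + j (Kronecker).\<close>

definition cinner :: "complex vec \<Rightarrow> complex vec \<Rightarrow> complex" where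
  "cinner u v = (\<Sum>i<dim_vec u. cnj (u $ i) * v $ i)"

definition orthonormal_basis :: "nat \<Rightarrow> (nat \<Rightarrow> complex vec) \<Rightarrow> bool" where
  "orthonormal_basis d f \<longleftrightarrow>
     (\<forall>i<d. f i \<in> carrier_vec d) \<and>
     (\<forall>i<d. \<forall>j<d. cinner (f i) (f j) = (if i = j then 1 else 0))"

definition ket_bra :: "complex vec \<Rightarrow> complex vec \<Rightarrow> complex mat" where
  "ket_bra u v = mat (dim_vec u) (dim_vec v) (\<lambda>(i,j). u $ i * cnj (v $ j))"

definition adj :: "complex mat \<Rightarrow> complex mat" where
  "adj M = mat (dim_col M) (dim_row M) (\<lambda>(i,j). cnj (M $$ (j,i)))"

definition unitary_mat :: "nat \<Rightarrow> complex mat \<Rightarrow> bool" where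
  "unitary_mat d U \<longleftrightarrow> U \<in> carrier_mat d d \<and> adj U * U = 1\<^sub>m d \<and> U * adj U = 1\<^sub>m d"

definition tensor_vec :: "complex vec \<Rightarrow> complex vec \<Rightarrow> complex vec" where
  "tensor_vec a b = vec (dim_vec a * dim_vec b)
     (\<lambda>k. a $ (k div dim_vec b) * b $ (k mod dim_vec b))"

definition tensor_mat :: "complex mat \<Rightarrow> complex mat \<Rightarrow> complex mat" where
  "tensor_mat A B = mat (dim_row A * dim_row B) (dim_col A * dim_col B)
     (\<lambda>(i,j). A $$ (i div dim_row B, j div dim_col B) * B $$ (i mod dim_row B, j mod dim_col B))"

definition ptrace_O :: "nat \<Rightarrow> nat \<Rightarrow> complex mat \<Rightarrow> complex mat" where
  "ptrace_O dO dR M = mat dR dR (\<lambda>(i,j). \<Sum>k<dO. M $$ (k * dR + i, k * dR + j))"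

definition spec_sum :: "nat \<Rightarrow> (nat \<Rightarrow> real) \<Rightarrow> (nat \<Rightarrow> complex vec) \<Rightarrow> complex mat" where
  "spec_sum d c v = mat d d (\<lambda>(i,j). \<Sum>m<d. complex_of_real (c m) * (ket_bra (v m) (v m)) $$ (i,j))"

text \<open>Gibbs state exp(-beta H)/tr exp(-beta H) of H = sum lam m |xi m><xi m|,
  computed by functional calculus on the spectral decomposition.\<close>
definition gibbs_weights :: "nat \<Rightarrow> real \<Rightarrow> (nat \<Rightarrow> real) \<Rightarrow> nat \<Rightarrow> real" where
  "gibbs_weights d \<beta> lam m = exp (- \<beta> * lam m) / (\<Sum>k<d. exp (- \<beta> * lam k))"

definition mtrace :: "complex mat \<Rightarrow> complex" where
  "mtrace M = (\<Sum>i<dim_row M. M $$ (i,i))"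

definition heat :: "nat \<Rightarrow> nat \<Rightarrow> complex mat \<Rightarrow> complex mat \<Rightarrow> complex mat \<Rightarrow> complex mat \<Rightarrow> real" where
  "heat dO dR HR rhoR rho U = Re (mtrace (HR * (ptrace_O dO dR (U * rho * adj U) - rhoR)))"

end

theory Submission
  imports Defs "Jordan_Normal_Form.Determinant"
begin

text \<open>Expanding \<open>\<rho>\<close> in the product basis \<open>\<psi>_n\<close>, the heat of a unitary \<open>U\<close> is
  \<open>\<Sum>_n p_n \<Sum>_m \<lambda>_m D_nm - tr[H_R \<rho>_R]\<close> with \<open>D_nm = \<langle>\<xi>_m| tr_O(U|\<psi>_n\<rangle>\<langle>\<psi>_n|U\<^sup>\<dagger>) |\<xi>_m\<rangle>\<close>.
  For every unitary the rows of \<open>D\<close> sum to 1 and its columns to \<open>d_O\<close>, whereas for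
  \<open>U_maj\<close> it is the block matrix \<open>D_nm = [m = n div d_O]\<close>. Since \<open>p\<close> is non-increasing,
  Abel summation reduces the comparison to the partial sums over \<open>n < k\<close>, and there it is
  the bathtub principle: for the non-decreasing \<open>\<lambda>\<close>, the cost \<open>\<Sum>_m \<lambda>_m x_m\<close> of weights
  \<open>0 \<le> x_m \<le> d_O\<close> of fixed total \<open>k\<close> is smallest when the lowest levels are filled first.\<close>

lemma div_eq_iff_bounds:
  fixes n d m :: nat
  assumes "0 < d"
  shows "n div d = m \<longleftrightarrow> m * d \<le> n \<and> n < m * d + d"
  using assms by (metis add.commute div_nat_eqI dividend_less_div_times mult.commute
    mult_Suc times_div_less_eq_dividend)

lemma mult_add_less_mult:
  fixes k j a b :: nat
  assumes "k < a" "j < b"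
  shows "k * b + j < a * b"
proof -
  have "k * b + j < Suc k * b" using assms(2) by simp
  also have "\<dots> \<le> a * b" using assms(1) by (intro mult_le_mono1) simp
  finally show ?thesis .
qed

lemma sum_lessThan_mult_split:
  fixes h :: "nat \<Rightarrow> 'a::comm_monoid_add"
  shows "(\<Sum>k<a. \<Sum>j<b. h (k * b + j)) = (\<Sum>x<a * b. h x)"
proof -
  have "(\<Sum>j<b. h (k * b + j)) = (\<Sum>x\<in>{k * b..<k * b + b}. h x)" for k
    using sum.shift_bounds_nat_ivl[of h 0 "k * b" b]
    by (simp add: atLeast0LessThan add.commute)
  then show ?thesis by (simp add: sum.nat_group)
qed

lemma sum_lessThan_div_eq:
  fixes f :: "nat \<Rightarrow> 'a::comm_semiring_1"
  assumes "k \<le> d * R"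
  shows "(\<Sum>n<k. f (n div d)) = (\<Sum>m<R. f m * of_nat (card {n. n < k \<and> n div d = m}))"
proof -
  have "d > 0 \<or> k = 0" using assms by (cases "d = 0") auto
  then have "(\<lambda>n. n div d) ` {..<k} \<subseteq> {..<R}"
    using assms by (auto simp: less_mult_imp_div_less mult.commute)
  then have "(\<Sum>n<k. f (n div d)) = (\<Sum>m<R. \<Sum>n\<in>{n. n \<in> {..<k} \<and> n div d = m}. f (n div d))"
    by (intro sum.group[symmetric]) auto
  also have "\<dots> = (\<Sum>m<R. f m * of_nat (card {n. n < k \<and> n div d = m}))"
    by (intro sum.cong refl) (simp add: mult.commute)
  finally show ?thesis .
qed

lemma card_div_eq_full:
  assumes "0 < d" "m * d + d \<le> k"
  shows "card {n. n < k \<and> n div d = m} = d"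
proof -
  have "{n. n < k \<and> n div d = m} = {m * d..<m * d + d}"
    using assms by (auto simp: div_eq_iff_bounds)
  then show ?thesis by simp
qed

lemma card_div_eq_empty:
  fixes k d m :: nat
  assumes "k div d < m"
  shows "card {n. n < k \<and> n div d = m} = 0"
  using assms div_le_mono[of _ k d] by (auto simp: card_eq_0_iff)
    (metis leD less_imp_le_nat)

lemma sum_mult_nonneg_of_antimono:
  fixes p c :: "nat \<Rightarrow> real"
  assumes p: "\<And>n. Suc n < K \<Longrightarrow> p (Suc n) \<le> p n"
    and partial: "\<And>k. k \<le> K \<Longrightarrow> 0 \<le> (\<Sum>n<k. c n)"
    and total: "(\<Sum>n<K. c n) = 0"
  shows "0 \<le> (\<Sum>n<K. p n * c n)"
proof -
  have summation_by_parts: "p k * (\<Sum>n<Suc k. c n) \<le> (\<Sum>n<Suc k. p n * c n)" if "Suc k \<le> K" for k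
    using that
  proof (induction k)
    case (Suc k)
    have "p (Suc k) * (\<Sum>n<Suc k. c n) \<le> p k * (\<Sum>n<Suc k. c n)"
      using p[of k] partial[of "Suc k"] Suc.prems by (intro mult_right_mono) auto
    then show ?case using Suc by (simp add: algebra_simps)
  qed simp
  show ?thesis
    using summation_by_parts[of "K - 1"] total by (cases K) auto
qed

lemma bathtub_principle:
  fixes lam x y :: "nat \<Rightarrow> real"
  assumes lam: "\<And>m m'. m \<le> m' \<Longrightarrow> m' < d \<Longrightarrow> lam m \<le> lam m'"
    and x: "\<And>m. m < d \<Longrightarrow> 0 \<le> x m \<and> x m \<le> c"
    and y_full: "\<And>m. m < q \<Longrightarrow> y m = c"
    and y_empty: "\<And>m. q < m \<Longrightarrow> y m = 0"
    and same_total: "(\<Sum>m<d. x m) = (\<Sum>m<d. y m)"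
  shows "(\<Sum>m<d. lam m * y m) \<le> (\<Sum>m<d. lam m * x m)"
proof -
  define t where "t = lam (min q (d - 1))"
  have "0 \<le> (lam m - t) * (x m - y m)" if m: "m < d" for m
  proof -
    consider "m < q" | "m = q" | "q < m" by linarith
    then show ?thesis
    proof cases
      case 1
      then have "lam m \<le> t" "x m \<le> y m" using m lam x y_full by (auto simp: t_def)
      then show ?thesis by (simp add: mult_nonpos_nonpos)
    next
      case 2
      then show ?thesis using m by (simp add: t_def min_def)
    next
      case 3
      then have "t \<le> lam m" "y m \<le> x m" using m lam x y_empty by (auto simp: t_def)
      then show ?thesis by simp
    qed
  qed
  then have "0 \<le> (\<Sum>m<d. (lam m - t) * (x m - y m))" by (intro sum_nonneg) auto
  also have "\<dots> = (\<Sum>m<d. lam m * x m) - (\<Sum>m<d. lam m * y m)"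
    using same_total
    by (simp add: left_diff_distrib right_diff_distrib sum_subtractf sum_distrib_left[symmetric])
  finally show ?thesis by simp
qed

definition stochastic_with_column_sum :: "nat \<Rightarrow> nat \<Rightarrow> real \<Rightarrow> (nat \<Rightarrow> nat \<Rightarrow> real) \<Rightarrow> bool" where
  "stochastic_with_column_sum K d c D \<longleftrightarrow>
     (\<forall>n<K. \<forall>m<d. 0 \<le> D n m) \<and> (\<forall>n<K. (\<Sum>m<d. D n m) = 1) \<and> (\<forall>m<d. (\<Sum>n<K. D n m) = c)"

lemma sum_mult_swap:
  fixes lam :: "nat \<Rightarrow> real"
  shows "(\<Sum>n<k. \<Sum>m<d. lam m * D n m) = (\<Sum>m<d. lam m * (\<Sum>n<k. D n m))"
  by (subst sum.swap) (simp add: sum_distrib_left)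

lemma partial_sum_div_le_stochastic:
  fixes lam :: "nat \<Rightarrow> real"
  assumes dO: "0 < dO"
    and lam: "\<And>m m'. m \<le> m' \<Longrightarrow> m' < dR \<Longrightarrow> lam m \<le> lam m'"
    and D: "stochastic_with_column_sum (dO * dR) dR (real dO) D"
    and k: "k \<le> dO * dR"
  shows "(\<Sum>n<k. lam (n div dO)) \<le> (\<Sum>n<k. \<Sum>m<dR. lam m * D n m)"
proof -
  define x where "x m = (\<Sum>n<k. D n m)" for m
  define y where "y m = real (card {n. n < k \<and> n div dO = m})" for m
  have "(\<Sum>n<k. lam (n div dO)) = (\<Sum>m<dR. lam m * y m)"
    unfolding y_def by (rule sum_lessThan_div_eq[OF k])
  also have "\<dots> \<le> (\<Sum>m<dR. lam m * x m)"
  proof (rule bathtub_principle[where c = "real dO" and q = "k div dO"])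
    show "lam m \<le> lam m'" if "m \<le> m'" "m' < dR" for m m' using lam that .
    show "0 \<le> x m \<and> x m \<le> real dO" if "m < dR" for m
    proof -
      have "x m \<le> (\<Sum>n<dO * dR. D n m)"
        unfolding x_def using D k that by (intro sum_mono2) (auto simp: stochastic_with_column_sum_def)
      moreover have "0 \<le> x m"
        unfolding x_def using D k that by (intro sum_nonneg) (auto simp: stochastic_with_column_sum_def)
      ultimately show ?thesis using D that by (simp add: stochastic_with_column_sum_def)
    qed
    show "y m = real dO" if "m < k div dO" for m
    proof -
      have "m * dO + dO \<le> k div dO * dO" using that by (metis mult_Suc mult_le_mono1 Suc_leI add.commute)
      also have "\<dots> \<le> k" by simp
      finally show ?thesis unfolding y_def using dO by (simp add: card_div_eq_full)
    qed
    show "y m = 0" if "k div dO < m" for m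
      unfolding y_def using that by (simp add: card_div_eq_empty)
    have "(\<Sum>m<dR. x m) = real k"
      unfolding x_def using D k by (subst sum.swap) (simp add: stochastic_with_column_sum_def)
    moreover have "(\<Sum>m<dR. y m) = real k"
      using sum_lessThan_div_eq[OF k, of "\<lambda>_. 1 :: real"] by (simp add: y_def)
    ultimately show "(\<Sum>m<dR. x m) = (\<Sum>m<dR. y m)" by simp
  qed
  also have "\<dots> = (\<Sum>n<k. \<Sum>m<dR. lam m * D n m)"
    unfolding x_def by (rule sum_mult_swap[symmetric])
  finally show ?thesis .
qed

lemma sum_mult_div_le_stochastic:
  fixes lam p :: "nat \<Rightarrow> real"
  assumes dO: "0 < dO"
    and lam: "\<And>m m'. m \<le> m' \<Longrightarrow> m' < dR \<Longrightarrow> lam m \<le> lam m'"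
    and p: "\<And>n n'. n \<le> n' \<Longrightarrow> n' < dO * dR \<Longrightarrow> p n' \<le> p n"
    and D: "stochastic_with_column_sum (dO * dR) dR (real dO) D"
  shows "(\<Sum>n<dO * dR. p n * lam (n div dO)) \<le> (\<Sum>n<dO * dR. p n * (\<Sum>m<dR. lam m * D n m))"
proof -
  define c where "c n = (\<Sum>m<dR. lam m * D n m) - lam (n div dO)" for n
  have "0 \<le> (\<Sum>n<dO * dR. p n * c n)"
  proof (rule sum_mult_nonneg_of_antimono)
    show "p (Suc n) \<le> p n" if "Suc n < dO * dR" for n using p that by simp
    show "0 \<le> (\<Sum>n<k. c n)" if "k \<le> dO * dR" for k
      using partial_sum_div_le_stochastic[OF dO lam D that] by (simp add: c_def sum_subtractf)
    have "(\<Sum>n<dO * dR. lam (n div dO)) = (\<Sum>m<dR. lam m * real (card {n. n < dO * dR \<and> n div dO = m}))"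
      by (rule sum_lessThan_div_eq) simp
    also have "\<dots> = (\<Sum>m<dR. lam m * real dO)"
    proof (intro sum.cong refl)
      fix m assume "m \<in> {..<dR}"
      then have "m * dO + dO \<le> dO * dR" by (metis lessThan_iff mult.commute mult_Suc Suc_leI add.commute mult_le_mono1)
      then show "lam m * real (card {n. n < dO * dR \<and> n div dO = m}) = lam m * real dO"
        using dO by (simp add: card_div_eq_full)
    qed
    also have "\<dots> = (\<Sum>n<dO * dR. \<Sum>m<dR. lam m * D n m)"
      using D by (simp add: sum_mult_swap stochastic_with_column_sum_def)
    finally show "(\<Sum>n<dO * dR. c n) = 0" by (simp add: c_def sum_subtractf)
  qed
  then show ?thesis by (simp add: c_def algebra_simps sum_subtractf)
qed

lemma adj_index [simp]:
  "i < dim_col M \<Longrightarrow> j < dim_row M \<Longrightarrow> adj M $$ (i, j) = cnj (M $$ (j, i))"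
  "dim_row (adj M) = dim_col M" "dim_col (adj M) = dim_row M"
  by (auto simp: adj_def)

lemma orthonormal_basis_carrier: "orthonormal_basis d f \<Longrightarrow> i < d \<Longrightarrow> f i \<in> carrier_vec d"
  by (auto simp: orthonormal_basis_def)

lemma orthonormal_basis_inner:
  assumes "orthonormal_basis d f" "i < d" "j < d"
  shows "(\<Sum>a<d. cnj (f i $ a) * f j $ a) = (if i = j then 1 else 0)"
proof -
  have "cinner (f i) (f j) = (if i = j then 1 else 0)" "dim_vec (f i) = d"
    using assms by (auto simp: orthonormal_basis_def)
  then show ?thesis by (simp add: cinner_def)
qed

lemma orthonormal_basis_norm:
  assumes "orthonormal_basis d f" "i < d"
  shows "(\<Sum>a<d. (cmod (f i $ a))\<^sup>2) = 1"
proof -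
  have "complex_of_real (\<Sum>a<d. (cmod (f i $ a))\<^sup>2) = (\<Sum>a<d. cnj (f i $ a) * f i $ a)"
    by (simp only: of_real_sum complex_norm_square mult.commute)
  also have "\<dots> = 1" using orthonormal_basis_inner[OF assms(1,2,2)] by simp
  finally show ?thesis by (metis of_real_1 of_real_eq_iff)
qed

text \<open>A left inverse of a square matrix is a right inverse: the matrix with columns
  \<open>f m\<close> has orthonormal columns, hence orthonormal rows.\<close>
lemma orthonormal_basis_complete:
  assumes f: "orthonormal_basis d f" and i: "i < d" and j: "j < d"
  shows "(\<Sum>m<d. cnj (f m $ i) * f m $ j) = (if i = j then 1 else 0)"
proof -
  define X where "X = mat d d (\<lambda>(a, m). f m $ a)"
  have X: "X \<in> carrier_mat d d" unfolding X_def by simp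
  have aX: "adj X \<in> carrier_mat d d" using X by (simp add: adj_def)
  have "adj X * X = 1\<^sub>m d"
  proof (rule eq_matI)
    fix a b assume ab: "a < dim_row (1\<^sub>m d)" "b < dim_col (1\<^sub>m d)"
    then have "(adj X * X) $$ (a, b) = (\<Sum>c<d. cnj (f a $ c) * f b $ c)"
      using X by (simp add: scalar_prod_def X_def atLeast0LessThan)
    also have "\<dots> = 1\<^sub>m d $$ (a, b)" using orthonormal_basis_inner[OF f] ab by simp
    finally show "(adj X * X) $$ (a, b) = 1\<^sub>m d $$ (a, b)" .
  qed (use X in auto)
  then have "X * adj X = 1\<^sub>m d" by (rule mat_mult_left_right_inverse[OF aX X])
  then have "(X * adj X) $$ (j, i) = 1\<^sub>m d $$ (j, i)" by simp
  then show ?thesis using X i j by (simp add: scalar_prod_def X_def atLeast0LessThan mult.commute)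
qed

lemma sum_cmod_square_isometry:
  fixes f :: "nat \<Rightarrow> nat \<Rightarrow> complex" and w :: "nat \<Rightarrow> complex"
  assumes orth: "\<And>a b. a < d \<Longrightarrow> b < d \<Longrightarrow>
      (\<Sum>n<K. cnj (f n a) * f n b) = (if a = b then 1 else 0)"
  shows "(\<Sum>n<K. (cmod (\<Sum>a<d. cnj (f n a) * w a))\<^sup>2) = (\<Sum>a<d. (cmod (w a))\<^sup>2)"
proof -
  have "complex_of_real (\<Sum>n<K. (cmod (\<Sum>a<d. cnj (f n a) * w a))\<^sup>2)
     = (\<Sum>n<K. \<Sum>b<d. \<Sum>a<d. w a * cnj (w b) * (cnj (f n a) * f n b))"
    by (simp only: of_real_sum complex_norm_square)
      (simp add: sum_distrib_left sum_distrib_right cnj_sum mult_ac)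
  also have "\<dots> = (\<Sum>b<d. \<Sum>a<d. w a * cnj (w b) * (\<Sum>n<K. cnj (f n a) * f n b))"
    by (subst sum.swap, rule sum.cong[OF refl], subst sum.swap) (simp add: sum_distrib_left)
  also have "\<dots> = (\<Sum>a<d. w a * cnj (w a))"
    by (simp add: orth if_distrib cong: if_cong)
  also have "\<dots> = complex_of_real (\<Sum>a<d. (cmod (w a))\<^sup>2)"
    by (simp only: of_real_sum complex_norm_square)
  finally show ?thesis using of_real_eq_iff by blast
qed

lemma tensor_vec_index:
  "i < dim_vec a * dim_vec b \<Longrightarrow> tensor_vec a b $ i = a $ (i div dim_vec b) * b $ (i mod dim_vec b)"
  "dim_vec (tensor_vec a b) = dim_vec a * dim_vec b"
  by (auto simp: tensor_vec_def)

lemma tensor_vec_index_split: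
  assumes "k < dim_vec a" "j < dim_vec b"
  shows "tensor_vec a b $ (k * dim_vec b + j) = a $ k * b $ j"
proof -
  have "k * dim_vec b + j < dim_vec a * dim_vec b"
    using assms by (rule mult_add_less_mult)
  moreover have "(k * dim_vec b + j) div dim_vec b = k" "(k * dim_vec b + j) mod dim_vec b = j"
    using assms(2) by (simp_all add: div_eq_iff_bounds)
  ultimately show ?thesis by (simp add: tensor_vec_index)
qed

lemma cinner_tensor_vec:
  assumes "dim_vec c = dim_vec a" "dim_vec e = dim_vec b"
  shows "cinner (tensor_vec a b) (tensor_vec c e) = cinner a c * cinner b e"
proof -
  have "tensor_vec c e $ (k * dim_vec b + j) = c $ k * e $ j"
    if "k < dim_vec a" "j < dim_vec b" for k j
    using tensor_vec_index_split[of k c j e] that assms by simp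
  then have "cinner (tensor_vec a b) (tensor_vec c e)
      = (\<Sum>k<dim_vec a. \<Sum>j<dim_vec b. cnj (a $ k * b $ j) * (c $ k * e $ j))"
    unfolding cinner_def tensor_vec_index(2) sum_lessThan_mult_split[symmetric]
    by (intro sum.cong refl) (simp add: tensor_vec_index_split)
  then show ?thesis by (simp add: cinner_def sum_product mult_ac)
qed

lemma orthonormal_basis_tensor_vec:
  assumes \<phi>: "orthonormal_basis dO \<phi>" and \<xi>: "orthonormal_basis dR \<xi>"
    and \<sigma>: "bij_betw \<sigma> {..<dO * dR} ({..<dO} \<times> {..<dR})"
  shows "orthonormal_basis (dO * dR) (\<lambda>n. tensor_vec (\<phi> (fst (\<sigma> n))) (\<xi> (snd (\<sigma> n))))"
proof -
  have \<sigma>_range: "fst (\<sigma> n) < dO" "snd (\<sigma> n) < dR" if "n < dO * dR" for n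
    using bij_betw_apply[OF \<sigma>, of n] that by (auto simp: mem_Times_iff)
  have \<sigma>_inj: "\<sigma> n = \<sigma> n' \<longleftrightarrow> n = n'" if "n < dO * dR" "n' < dO * dR" for n n'
    using bij_betw_imp_inj_on[OF \<sigma>] that by (auto dest: inj_onD)
  have dims: "dim_vec (\<phi> (fst (\<sigma> n))) = dO" "dim_vec (\<xi> (snd (\<sigma> n))) = dR"
    if "n < dO * dR" for n
    using orthonormal_basis_carrier[OF \<phi>] orthonormal_basis_carrier[OF \<xi>] \<sigma>_range[OF that] by auto
  have "cinner (\<phi> (fst (\<sigma> n))) (\<phi> (fst (\<sigma> n'))) * cinner (\<xi> (snd (\<sigma> n))) (\<xi> (snd (\<sigma> n')))
      = (if n = n' then 1 else 0)" if "n < dO * dR" "n' < dO * dR" for n n'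
    using \<phi> \<xi> \<sigma>_range[OF that(1)] \<sigma>_range[OF that(2)] \<sigma>_inj[OF that]
    by (auto simp: orthonormal_basis_def prod_eq_iff)
  moreover have "tensor_vec (\<phi> (fst (\<sigma> n))) (\<xi> (snd (\<sigma> n))) \<in> carrier_vec (dO * dR)"
    if "n < dO * dR" for n
    using dims[OF that] by (intro carrier_vecI) (simp add: tensor_vec_index(2))
  ultimately show ?thesis
    unfolding orthonormal_basis_def using dims by (simp add: cinner_tensor_vec)
qed

lemma spec_sum_dim [simp]: "dim_row (spec_sum d c v) = d" "dim_col (spec_sum d c v) = d"
  by (simp_all add: spec_sum_def)

lemma spec_sum_carrier: "spec_sum d c v \<in> carrier_mat d d"
  by (simp add: carrier_matI)

lemma spec_sum_index:
  assumes "\<And>m. m < d \<Longrightarrow> v m \<in> carrier_vec d" "i < d" "j < d"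
  shows "spec_sum d c v $$ (i, j) = (\<Sum>m<d. complex_of_real (c m) * (v m $ i * cnj (v m $ j)))"
  using assms(2,3) carrier_vecD[OF assms(1)] by (auto simp: spec_sum_def ket_bra_def intro!: sum.cong)

lemma tensor_mat_spec_sum:
  assumes \<phi>_onb: "orthonormal_basis dO \<phi>" and \<xi>_onb: "orthonormal_basis dR \<xi>"
    and \<sigma>: "bij_betw \<sigma> {..<dO * dR} ({..<dO} \<times> {..<dR})"
  shows "tensor_mat (spec_sum dO a \<phi>) (spec_sum dR b \<xi>) =
    spec_sum (dO * dR) (\<lambda>n. a (fst (\<sigma> n)) * b (snd (\<sigma> n)))
      (\<lambda>n. tensor_vec (\<phi> (fst (\<sigma> n))) (\<xi> (snd (\<sigma> n))))"
proof (rule eq_matI)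
  fix i j assume "i < dim_row (spec_sum (dO * dR) (\<lambda>n. a (fst (\<sigma> n)) * b (snd (\<sigma> n)))
      (\<lambda>n. tensor_vec (\<phi> (fst (\<sigma> n))) (\<xi> (snd (\<sigma> n)))))"
    "j < dim_col (spec_sum (dO * dR) (\<lambda>n. a (fst (\<sigma> n)) * b (snd (\<sigma> n)))
      (\<lambda>n. tensor_vec (\<phi> (fst (\<sigma> n))) (\<xi> (snd (\<sigma> n)))))"
  then have i: "i < dO * dR" and j: "j < dO * dR" by simp_all
  then have dR: "0 < dR" by (cases dR) auto
  have div: "i div dR < dO" "j div dR < dO" using i j by (simp_all add: less_mult_imp_div_less)
  have mod: "i mod dR < dR" "j mod dR < dR" using dR by auto
  define G where "G = (\<lambda>(l, m). complex_of_real (a l * b m) *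
      (tensor_vec (\<phi> l) (\<xi> m) $ i * cnj (tensor_vec (\<phi> l) (\<xi> m) $ j)))"
  note \<phi> = orthonormal_basis_carrier[OF \<phi>_onb] and \<xi> = orthonormal_basis_carrier[OF \<xi>_onb]
    and \<psi> = orthonormal_basis_carrier[OF orthonormal_basis_tensor_vec[OF \<phi>_onb \<xi>_onb \<sigma>]]
  have "tensor_mat (spec_sum dO a \<phi>) (spec_sum dR b \<xi>) $$ (i, j) =
      (\<Sum>l<dO. complex_of_real (a l) * (\<phi> l $ (i div dR) * cnj (\<phi> l $ (j div dR)))) *
      (\<Sum>m<dR. complex_of_real (b m) * (\<xi> m $ (i mod dR) * cnj (\<xi> m $ (j mod dR))))"
    using i j div mod \<phi> \<xi> by (simp add: tensor_mat_def spec_sum_index)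
  also have "\<dots> = (\<Sum>l<dO. \<Sum>m<dR. G (l, m))"
    unfolding sum_product G_def
  proof (intro sum.cong refl)
    fix l m assume "l \<in> {..<dO}" "m \<in> {..<dR}"
    then have "dim_vec (\<phi> l) = dO" "dim_vec (\<xi> m) = dR" using \<phi> \<xi> by auto
    then show "complex_of_real (a l) * (\<phi> l $ (i div dR) * cnj (\<phi> l $ (j div dR))) *
        (complex_of_real (b m) * (\<xi> m $ (i mod dR) * cnj (\<xi> m $ (j mod dR)))) =
      (case (l, m) of (l, m) \<Rightarrow> complex_of_real (a l * b m) *
        (tensor_vec (\<phi> l) (\<xi> m) $ i * cnj (tensor_vec (\<phi> l) (\<xi> m) $ j)))"
      using i j by (simp add: tensor_vec_index mult_ac)
  qed
  also have "\<dots> = (\<Sum>x\<in>{..<dO} \<times> {..<dR}. G x)" by (simp add: sum.cartesian_product)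
  also have "\<dots> = (\<Sum>n<dO * dR. G (\<sigma> n))" by (rule sum.reindex_bij_betw[OF \<sigma>, symmetric])
  also have "\<dots> = spec_sum (dO * dR) (\<lambda>n. a (fst (\<sigma> n)) * b (snd (\<sigma> n)))
      (\<lambda>n. tensor_vec (\<phi> (fst (\<sigma> n))) (\<xi> (snd (\<sigma> n)))) $$ (i, j)"
    using i j \<psi> by (simp add: spec_sum_index G_def case_prod_beta)
  finally show "tensor_mat (spec_sum dO a \<phi>) (spec_sum dR b \<xi>) $$ (i, j) = \<dots>" .
qed (simp_all add: tensor_mat_def)

lemma row_scalar_prod_sum:
  assumes "U \<in> carrier_mat d d" "v \<in> carrier_vec d" "k < d"
  shows "row U k \<bullet> v = (\<Sum>b<d. U $$ (k, b) * v $ b)"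
  using assms by (auto simp: scalar_prod_def atLeast0LessThan intro!: sum.cong)

lemma mult_spec_sum_adj:
  assumes U: "U \<in> carrier_mat d d" and v: "\<And>n. n < d \<Longrightarrow> v n \<in> carrier_vec d"
  shows "U * spec_sum d p v * adj U = spec_sum d p (\<lambda>n. U *\<^sub>v v n)"
proof (rule eq_matI)
  fix i j assume "i < dim_row (spec_sum d p (\<lambda>n. U *\<^sub>v v n))" "j < dim_col (spec_sum d p (\<lambda>n. U *\<^sub>v v n))"
  then have i: "i < d" and j: "j < d" by simp_all
  define Q where "Q a b n = complex_of_real (p n) *
      (U $$ (i, a) * v n $ a * (cnj (U $$ (j, b)) * cnj (v n $ b)))" for a b n
  have "(U * spec_sum d p v * adj U) $$ (i, j) =
      (\<Sum>b<d. (\<Sum>a<d. U $$ (i, a) * spec_sum d p v $$ (a, b)) * cnj (U $$ (j, b)))"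
    using U i j by (auto simp: scalar_prod_def atLeast0LessThan intro!: sum.cong)
  also have "\<dots> = (\<Sum>b<d. \<Sum>a<d. \<Sum>n<d. Q a b n)"
    using v by (intro sum.cong refl)
      (simp add: spec_sum_index Q_def sum_distrib_left sum_distrib_right mult_ac)
  also have "\<dots> = (\<Sum>b<d. \<Sum>n<d. \<Sum>a<d. Q a b n)"
    by (rule sum.cong[OF refl], rule sum.swap)
  also have "\<dots> = (\<Sum>n<d. \<Sum>b<d. \<Sum>a<d. Q a b n)"
    by (rule sum.swap)
  also have "\<dots> = spec_sum d p (\<lambda>n. U *\<^sub>v v n) $$ (i, j)"
    using U v i j by (simp add: spec_sum_index row_scalar_prod_sum Q_def sum_distrib_left sum_distrib_right cnj_sum mult_ac)
  finally show "(U * spec_sum d p v * adj U) $$ (i, j) = spec_sum d p (\<lambda>n. U *\<^sub>v v n) $$ (i, j)" .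
qed (use U in simp_all)

lemma mtrace_mult:
  assumes "A \<in> carrier_mat d d" "B \<in> carrier_mat d d"
  shows "mtrace (A * B) = (\<Sum>i<d. \<Sum>j<d. A $$ (i, j) * B $$ (j, i))"
  using assms by (auto simp: mtrace_def scalar_prod_def atLeast0LessThan intro!: sum.cong)

lemma mtrace_minus:
  "A \<in> carrier_mat d d \<Longrightarrow> B \<in> carrier_mat d d \<Longrightarrow> mtrace (A - B) = mtrace A - mtrace B"
  by (simp add: mtrace_def sum_subtractf)

text \<open>The weight \<open>\<langle>\<xi>_m| tr_O(|v\<rangle>\<langle>v|) |\<xi>_m\<rangle>\<close> of \<open>\<xi> m\<close> in the
  reduced state on \<open>H_R\<close> of the pure state \<open>v\<close>.\<close>
definition marginal_prob :: "nat \<Rightarrow> nat \<Rightarrow> (nat \<Rightarrow> complex vec) \<Rightarrow> complex vec \<Rightarrow> nat \<Rightarrow> real" where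
  "marginal_prob dO dR \<xi> v m = (\<Sum>k<dO. (cmod (\<Sum>j<dR. cnj (\<xi> m $ j) * v $ (k * dR + j)))\<^sup>2)"

lemma mtrace_spec_sum_ptrace_O:
  fixes p lam :: "nat \<Rightarrow> real"
  assumes \<xi>: "\<And>m. m < dR \<Longrightarrow> \<xi> m \<in> carrier_vec dR"
    and v: "\<And>n. n < dO * dR \<Longrightarrow> v n \<in> carrier_vec (dO * dR)"
  shows "mtrace (spec_sum dR lam \<xi> * ptrace_O dO dR (spec_sum (dO * dR) p v))
     = complex_of_real (\<Sum>n<dO * dR. p n * (\<Sum>m<dR. lam m * marginal_prob dO dR \<xi> (v n) m))"
proof -
  define N where "N = dO * dR"
  define F where "F i j m k n = complex_of_real (lam m) * complex_of_real (p n) *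
     (\<xi> m $ i * cnj (\<xi> m $ j) * (v n $ (k * dR + j) * cnj (v n $ (k * dR + i))))" for i j m k n
  have P: "ptrace_O dO dR (spec_sum N p v) \<in> carrier_mat dR dR" by (simp add: ptrace_O_def)
  have "mtrace (spec_sum dR lam \<xi> * ptrace_O dO dR (spec_sum N p v)) =
     (\<Sum>i<dR. \<Sum>j<dR. (\<Sum>m<dR. complex_of_real (lam m) * (\<xi> m $ i * cnj (\<xi> m $ j))) *
        (\<Sum>k<dO. \<Sum>n<N. complex_of_real (p n) * (v n $ (k * dR + j) * cnj (v n $ (k * dR + i)))))"
    unfolding mtrace_mult[OF spec_sum_carrier P] using \<xi> v
    by (intro sum.cong refl arg_cong2[where f = "(*)"])
      (auto simp: spec_sum_index ptrace_O_def N_def mult_add_less_mult)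
  also have "\<dots> = (\<Sum>i<dR. \<Sum>j<dR. \<Sum>k<dO. \<Sum>n<N. \<Sum>m<dR. F i j m k n)"
    by (simp add: F_def sum_distrib_left sum_distrib_right mult_ac)
  also have "\<dots> = (\<Sum>j<dR. \<Sum>k<dO. \<Sum>n<N. \<Sum>m<dR. \<Sum>i<dR. F i j m k n)"
    by (subst sum.swap, rule sum.cong[OF refl], subst sum.swap, rule sum.cong[OF refl],
        subst sum.swap, rule sum.cong[OF refl], rule sum.swap)
  also have "\<dots> = (\<Sum>k<dO. \<Sum>n<N. \<Sum>m<dR. \<Sum>j<dR. \<Sum>i<dR. F i j m k n)"
    by (subst sum.swap, rule sum.cong[OF refl], subst sum.swap, rule sum.cong[OF refl], rule sum.swap)
  also have "\<dots> = (\<Sum>n<N. \<Sum>m<dR. \<Sum>k<dO. \<Sum>j<dR. \<Sum>i<dR. F i j m k n)"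
    by (subst sum.swap, rule sum.cong[OF refl], rule sum.swap)
  also have "\<dots> = (\<Sum>n<N. complex_of_real (p n) * (\<Sum>m<dR. complex_of_real (lam m) * (\<Sum>k<dO.
         (\<Sum>j<dR. cnj (\<xi> m $ j) * v n $ (k * dR + j)) * cnj (\<Sum>i<dR. cnj (\<xi> m $ i) * v n $ (k * dR + i)))))"
    by (simp add: F_def sum_distrib_left sum_distrib_right cnj_sum mult_ac)
  also have "\<dots> = complex_of_real (\<Sum>n<N. p n * (\<Sum>m<dR. lam m * marginal_prob dO dR \<xi> (v n) m))"
    by (simp only: marginal_prob_def of_real_sum of_real_mult complex_norm_square)
  finally show ?thesis by (simp add: N_def)
qed

lemma heat_spec_sum:
  assumes \<xi>: "\<And>m. m < dR \<Longrightarrow> \<xi> m \<in> carrier_vec dR" and rhoR: "rhoR \<in> carrier_mat dR dR"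
    and V: "V \<in> carrier_mat (dO * dR) (dO * dR)"
    and \<psi>: "\<And>n. n < dO * dR \<Longrightarrow> \<psi> n \<in> carrier_vec (dO * dR)"
  shows "heat dO dR (spec_sum dR lam \<xi>) rhoR (spec_sum (dO * dR) p \<psi>) V =
    (\<Sum>n<dO * dR. p n * (\<Sum>m<dR. lam m * marginal_prob dO dR \<xi> (V *\<^sub>v \<psi> n) m))
      - Re (mtrace (spec_sum dR lam \<xi> * rhoR))"
proof -
  define H where "H = spec_sum dR lam \<xi>"
  define P where "P = ptrace_O dO dR (V * spec_sum (dO * dR) p \<psi> * adj V)"
  have H: "H \<in> carrier_mat dR dR" and P: "P \<in> carrier_mat dR dR"
    by (simp_all add: H_def spec_sum_carrier P_def ptrace_O_def)
  have "mtrace (H * (P - rhoR)) = mtrace (H * P) - mtrace (H * rhoR)"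
    using H P rhoR by (simp add: mult_minus_distrib_mat mtrace_minus[of _ dR])
  moreover have "mtrace (H * P) = complex_of_real
      (\<Sum>n<dO * dR. p n * (\<Sum>m<dR. lam m * marginal_prob dO dR \<xi> (V *\<^sub>v \<psi> n) m))"
  proof -
    have "V * spec_sum (dO * dR) p \<psi> * adj V = spec_sum (dO * dR) p (\<lambda>n. V *\<^sub>v \<psi> n)"
      using V \<psi> by (rule mult_spec_sum_adj)
    moreover have "V *\<^sub>v \<psi> n \<in> carrier_vec (dO * dR)" if "n < dO * dR" for n
      using V \<psi>[OF that] by simp
    ultimately show ?thesis
      unfolding H_def P_def by (simp only:) (rule mtrace_spec_sum_ptrace_O; use \<xi> in simp)
  qed
  ultimately show ?thesis by (simp add: heat_def H_def P_def)
qed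

lemma unitary_mat_rows_orthonormal:
  assumes U: "unitary_mat d U" and "r < d" "r' < d"
  shows "(\<Sum>b<d. cnj (U $$ (r, b)) * U $$ (r', b)) = (if r = r' then 1 else 0)"
proof -
  have UU: "U * adj U = 1\<^sub>m d" and Uc: "U \<in> carrier_mat d d" using U by (auto simp: unitary_mat_def)
  have "(U * adj U) $$ (r', r) = 1\<^sub>m d $$ (r', r)" using UU by simp
  then show ?thesis using assms(2,3) Uc by (auto simp: scalar_prod_def atLeast0LessThan mult.commute)
qed

lemma unitary_mat_columns_orthonormal:
  assumes U: "unitary_mat d U" and "c < d" "c' < d"
  shows "(\<Sum>a<d. cnj (U $$ (a, c)) * U $$ (a, c')) = (if c = c' then 1 else 0)"
proof -
  have UU: "adj U * U = 1\<^sub>m d" and Uc: "U \<in> carrier_mat d d" using U by (auto simp: unitary_mat_def)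
  have "(adj U * U) $$ (c, c') = 1\<^sub>m d $$ (c, c')" using UU by simp
  then show ?thesis using assms(2,3) Uc by (auto simp: scalar_prod_def atLeast0LessThan)
qed

lemma sum_cmod_square_unitary:
  assumes U: "unitary_mat d U" and v: "v \<in> carrier_vec d"
  shows "(\<Sum>a<d. (cmod ((U *\<^sub>v v) $ a))\<^sup>2) = (\<Sum>b<d. (cmod (v $ b))\<^sup>2)"
proof -
  have Uc: "U \<in> carrier_mat d d" using U by (simp add: unitary_mat_def)
  have "(U *\<^sub>v v) $ a = (\<Sum>b<d. cnj (cnj (U $$ (a, b))) * v $ b)" if "a < d" for a
    using Uc v that by (simp add: row_scalar_prod_sum)
  then show ?thesis
    using sum_cmod_square_isometry[where f = "\<lambda>a b. cnj (U $$ (a, b))"]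
      unitary_mat_columns_orthonormal[OF U]
    by (simp add: mult.commute)
qed

lemma sum_marginal_prob:
  assumes \<xi>: "orthonormal_basis dR \<xi>"
  shows "(\<Sum>m<dR. marginal_prob dO dR \<xi> v m) = (\<Sum>a<dO * dR. (cmod (v $ a))\<^sup>2)"
proof -
  have "(\<Sum>m<dR. marginal_prob dO dR \<xi> v m)
      = (\<Sum>k<dO. \<Sum>m<dR. (cmod (\<Sum>j<dR. cnj (\<xi> m $ j) * v $ (k * dR + j)))\<^sup>2)"
    unfolding marginal_prob_def by (rule sum.swap)
  also have "\<dots> = (\<Sum>k<dO. \<Sum>j<dR. (cmod (v $ (k * dR + j)))\<^sup>2)"
    by (intro sum.cong refl sum_cmod_square_isometry orthonormal_basis_complete[OF \<xi>])
  also have "\<dots> = (\<Sum>a<dO * dR. (cmod (v $ a))\<^sup>2)" by (rule sum_lessThan_mult_split)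
  finally show ?thesis .
qed

text \<open>The amplitudes of the orthonormal basis \<open>U \<psi>\<close> along the rows \<open>r j\<close> are the
  coefficients of \<open>\<psi>\<close> in the vector \<open>U\<^sup>\<dagger>(\<Sum>_j u_j e_{r j})\<close>, whose norm is that of \<open>u\<close>.\<close>
lemma sum_cmod_square_amplitude_basis:
  assumes U: "unitary_mat N U" and \<psi>: "orthonormal_basis N \<psi>"
    and r: "\<And>j. j < d \<Longrightarrow> r j < N" and r_inj: "inj_on r {..<d}"
  shows "(\<Sum>n<N. (cmod (\<Sum>j<d. cnj (u $ j) * (U *\<^sub>v \<psi> n) $ r j))\<^sup>2) = (\<Sum>j<d. (cmod (u $ j))\<^sup>2)"
proof -
  define w where "w b = (\<Sum>j<d. cnj (U $$ (r j, b)) * u $ j)" for b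
  have Uc: "U \<in> carrier_mat N N" using U by (simp add: unitary_mat_def)
  have "(\<Sum>j<d. cnj (u $ j) * (U *\<^sub>v \<psi> n) $ r j) = cnj (\<Sum>b<N. cnj (\<psi> n $ b) * w b)"
    if n: "n < N" for n
    using Uc orthonormal_basis_carrier[OF \<psi> n] r unfolding w_def
    by (simp add: row_scalar_prod_sum sum_distrib_left sum_distrib_right cnj_sum mult_ac)
      (rule sum.swap)
  then have "cmod (\<Sum>j<d. cnj (u $ j) * (U *\<^sub>v \<psi> n) $ r j) = cmod (\<Sum>b<N. cnj (\<psi> n $ b) * w b)"
    if "n < N" for n
    using that by (metis complex_mod_cnj)
  then have "(\<Sum>n<N. (cmod (\<Sum>j<d. cnj (u $ j) * (U *\<^sub>v \<psi> n) $ r j))\<^sup>2)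
      = (\<Sum>n<N. (cmod (\<Sum>b<N. cnj (\<psi> n $ b) * w b))\<^sup>2)"
    by simp
  also have "\<dots> = (\<Sum>b<N. (cmod (w b))\<^sup>2)"
    by (rule sum_cmod_square_isometry) (use orthonormal_basis_complete[OF \<psi>] in simp)
  also have "\<dots> = (\<Sum>j<d. (cmod (u $ j))\<^sup>2)"
    unfolding w_def
  proof (rule sum_cmod_square_isometry[where f = "\<lambda>b j. U $$ (r j, b)"])
    fix j j' assume "j < d" "j' < d"
    then show "(\<Sum>b<N. cnj (U $$ (r j, b)) * U $$ (r j', b)) = (if j = j' then 1 else 0)"
      using unitary_mat_rows_orthonormal[OF U r r] r_inj by (auto dest: inj_onD)
  qed
  finally show ?thesis .
qed

lemma sum_marginal_prob_basis:
  assumes \<xi>: "orthonormal_basis dR \<xi>" and U: "unitary_mat (dO * dR) U"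
    and \<psi>: "orthonormal_basis (dO * dR) \<psi>" and m: "m < dR"
  shows "(\<Sum>n<dO * dR. marginal_prob dO dR \<xi> (U *\<^sub>v \<psi> n) m) = real dO"
proof -
  have "(\<Sum>n<dO * dR. (cmod (\<Sum>j<dR. cnj (\<xi> m $ j) * (U *\<^sub>v \<psi> n) $ (k * dR + j)))\<^sup>2) = 1"
    if "k < dO" for k
    using sum_cmod_square_amplitude_basis[OF U \<psi>, of dR "\<lambda>j. k * dR + j" "\<xi> m"]
      orthonormal_basis_norm[OF \<xi> m] mult_add_less_mult[OF that]
    by (simp add: inj_on_def)
  then show ?thesis
    unfolding marginal_prob_def by (subst sum.swap) simp
qed

lemma marginal_prob_tensor_vec:
  assumes \<xi>: "orthonormal_basis dR \<xi>" and u: "u \<in> carrier_vec dO"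
    and m': "m' < dR" and m: "m < dR"
  shows "marginal_prob dO dR \<xi> (tensor_vec u (\<xi> m')) m = (\<Sum>k<dO. (cmod (u $ k))\<^sup>2) * (if m = m' then 1 else 0)"
proof -
  have "tensor_vec u (\<xi> m') $ (k * dR + j) = u $ k * \<xi> m' $ j" if "k < dO" "j < dR" for k j
    using tensor_vec_index_split[of k u j "\<xi> m'"] orthonormal_basis_carrier[OF \<xi> m'] u that by simp
  then have "(\<Sum>j<dR. cnj (\<xi> m $ j) * tensor_vec u (\<xi> m') $ (k * dR + j))
      = u $ k * (\<Sum>j<dR. cnj (\<xi> m $ j) * \<xi> m' $ j)" if "k < dO" for k
    using that by (auto simp: sum_distrib_left intro!: sum.cong)
  then show ?thesis
    unfolding marginal_prob_def
    by (simp add: orthonormal_basis_inner[OF \<xi> m m'] sum_distrib_right norm_mult power_mult_distrib)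
qed

lemma sum_marginal_prob_tensor_vec:
  fixes lam :: "nat \<Rightarrow> real"
  assumes \<xi>: "orthonormal_basis dR \<xi>" and u: "u \<in> carrier_vec dO"
    and u_norm: "(\<Sum>k<dO. (cmod (u $ k))\<^sup>2) = 1" and m': "m' < dR"
  shows "(\<Sum>m<dR. lam m * marginal_prob dO dR \<xi> (tensor_vec u (\<xi> m')) m) = lam m'"
proof -
  have "(\<Sum>m<dR. lam m * marginal_prob dO dR \<xi> (tensor_vec u (\<xi> m')) m)
      = (\<Sum>m<dR. lam m * (if m = m' then 1 else 0))"
    using marginal_prob_tensor_vec[OF \<xi> u m'] u_norm by simp
  also have "\<dots> = lam m'" using m' by (simp add: if_distrib cong: if_cong)
  finally show ?thesis .
qed

lemma stochastic_marginal_prob: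
  assumes \<xi>: "orthonormal_basis dR \<xi>" and U: "unitary_mat (dO * dR) U"
    and \<psi>: "orthonormal_basis (dO * dR) \<psi>"
  shows "stochastic_with_column_sum (dO * dR) dR (real dO) (\<lambda>n m. marginal_prob dO dR \<xi> (U *\<^sub>v \<psi> n) m)"
proof -
  have "(\<Sum>m<dR. marginal_prob dO dR \<xi> (U *\<^sub>v \<psi> n) m) = 1" if n: "n < dO * dR" for n
  proof -
    have "\<psi> n \<in> carrier_vec (dO * dR)" by (rule orthonormal_basis_carrier[OF \<psi> n])
    then show ?thesis
      using orthonormal_basis_norm[OF \<psi> n] by (simp add: sum_marginal_prob[OF \<xi>] sum_cmod_square_unitary[OF U])
  qed
  moreover have "0 \<le> marginal_prob dO dR \<xi> v m" for v m
    by (simp add: marginal_prob_def sum_nonneg)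
  ultimately show ?thesis
    unfolding stochastic_with_column_sum_def by (simp add: sum_marginal_prob_basis[OF \<xi> U \<psi>])
qed

theorem lemma3:
  fixes dO dR :: nat
    and lam :: "nat \<Rightarrow> real" and xi :: "nat \<Rightarrow> complex vec" and \<beta> :: real
    and oc :: "nat \<Rightarrow> real" and \<phi> :: "nat \<Rightarrow> complex vec"
    and \<sigma> :: "nat \<Rightarrow> nat \<times> nat"
    and Umaj :: "complex mat"
    and HR rhoR rhoO rho :: "complex mat"
  assumes dO: "dO \<ge> 1" and dR: "dR \<ge> 1"
    and xi_onb: "orthonormal_basis dR xi"
    and lam_sorted: "\<And>m m'. m \<le> m' \<Longrightarrow> m' < dR \<Longrightarrow> lam m \<le> lam m'"
    and HR_def: "HR = spec_sum dR lam xi"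
    and beta: "\<beta> > 0"
    and rhoR_def: "rhoR = spec_sum dR (gibbs_weights dR \<beta> lam) xi"
    and phi_onb: "orthonormal_basis dO \<phi>"
    and o_nonneg: "\<And>l. l < dO \<Longrightarrow> oc l \<ge> 0"
    and o_sum: "(\<Sum>l<dO. oc l) = 1"
    and o_sorted: "\<And>l l'. l \<le> l' \<Longrightarrow> l' < dO \<Longrightarrow> oc l' \<le> oc l"
    and rhoO_def: "rhoO = spec_sum dO oc \<phi>"
    and rho_def: "rho = tensor_mat rhoO rhoR"
    and \<sigma>_bij: "bij_betw \<sigma> {..<dO * dR} ({..<dO} \<times> {..<dR})"
    and p_sorted: "\<And>n n'. n \<le> n' \<Longrightarrow> n' < dO * dR \<Longrightarrow>
        oc (fst (\<sigma> n')) * gibbs_weights dR \<beta> lam (snd (\<sigma> n'))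
        \<le> oc (fst (\<sigma> n)) * gibbs_weights dR \<beta> lam (snd (\<sigma> n))"
    and Umaj_unitary: "unitary_mat (dO * dR) Umaj"
    and Umaj_action: "\<forall>m<dR. \<exists>\<phi>m. orthonormal_basis dO \<phi>m \<and>
        (\<forall>l<dO. Umaj *\<^sub>v tensor_vec (\<phi> (fst (\<sigma> (m * dO + l)))) (xi (snd (\<sigma> (m * dO + l))))
               = tensor_vec (\<phi>m l) (xi m))"
  shows "\<forall>U. unitary_mat (dO * dR) U \<longrightarrow>
           heat dO dR HR rhoR rho Umaj \<le> heat dO dR HR rhoR rho U"
proof (intro allI impI)
  fix U assume U: "unitary_mat (dO * dR) U"
  define p where "p n = oc (fst (\<sigma> n)) * gibbs_weights dR \<beta> lam (snd (\<sigma> n))" for n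
  define \<psi> where "\<psi> n = tensor_vec (\<phi> (fst (\<sigma> n))) (xi (snd (\<sigma> n)))" for n
  have \<psi>_onb: "orthonormal_basis (dO * dR) \<psi>"
    unfolding \<psi>_def by (rule orthonormal_basis_tensor_vec[OF phi_onb xi_onb \<sigma>_bij])
  have rho: "rho = spec_sum (dO * dR) p \<psi>"
    unfolding rho_def rhoO_def rhoR_def p_def \<psi>_def by (rule tensor_mat_spec_sum[OF phi_onb xi_onb \<sigma>_bij])
  have heat: "heat dO dR HR rhoR rho V =
      (\<Sum>n<dO * dR. p n * (\<Sum>m<dR. lam m * marginal_prob dO dR xi (V *\<^sub>v \<psi> n) m))
        - Re (mtrace (HR * rhoR))" if "unitary_mat (dO * dR) V" for V
    unfolding HR_def rho using that orthonormal_basis_carrier[OF xi_onb] orthonormal_basis_carrier[OF \<psi>_onb]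
    by (intro heat_spec_sum) (auto simp: rhoR_def spec_sum_carrier unitary_mat_def)
  have Umaj_marginal: "(\<Sum>m<dR. lam m * marginal_prob dO dR xi (Umaj *\<^sub>v \<psi> n) m) = lam (n div dO)"
    if n: "n < dO * dR" for n
  proof -
    have m: "n div dO < dR" and l: "n mod dO < dO"
      using n dO by (simp_all add: less_mult_imp_div_less mult.commute)
    obtain \<phi>m where \<phi>m: "orthonormal_basis dO \<phi>m"
      and act: "Umaj *\<^sub>v \<psi> n = tensor_vec (\<phi>m (n mod dO)) (xi (n div dO))"
      using Umaj_action m l unfolding \<psi>_def by (metis div_mult_mod_eq)
    show ?thesis unfolding act
      by (rule sum_marginal_prob_tensor_vec[OF xi_onb orthonormal_basis_carrier[OF \<phi>m l]
            orthonormal_basis_norm[OF \<phi>m l] m])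
  qed
  have "(\<Sum>n<dO * dR. p n * lam (n div dO))
      \<le> (\<Sum>n<dO * dR. p n * (\<Sum>m<dR. lam m * marginal_prob dO dR xi (U *\<^sub>v \<psi> n) m))"
    using dO lam_sorted p_sorted stochastic_marginal_prob[OF xi_onb U \<psi>_onb]
    by (intro sum_mult_div_le_stochastic) (auto simp: p_def)
  then show "heat dO dR HR rhoR rho Umaj \<le> heat dO dR HR rhoR rho U"
    by (simp add: heat[OF Umaj_unitary] heat[OF U] Umaj_marginal)
qed

end
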